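(* Let $X=\{\mathbf{x}_1,\ldots,\mathbf{x}_N\}\subset\mathbb{R}^n$, $\epsilon\ge0$, $\sigma$ a degree-compatible term ordering, and let $(\mathcal{O},G)$ be the output of the ABM algorithm with gradient-weighted normalization (described in the context) on $(X,\epsilon,\sigma)$. Let $P=\{\mathbf{p}_1,\ldots,\mathbf{p}_N\}\subset\mathbb{R}^n$ be perturbations and $X+P=\{\mathbf{x}_1+\mathbf{p}_1,\ldots,\mathbf{x}_N+\mathbf{p}_N\}$, and put $\|P\|_{\max}=\max_i\|\mathbf{p}_i\|$. If $g\in G$ is gradient-weighted unitary, then $$\|g(X+P)\|\le\epsilon+\|P\|_{\max}\deg(g)\sqrt{|X|}+o(\|P\|_{\max})\quad\text{as }\|P\|_{\max}\to0.$$
   Context: For a polynomial $h$, $h(X)=(h(\mathbf{x}_1),\ldots,h(\mathbf{x}_N))^\top$ and $\|\cdot\|$ is the Euclidean norm; $o(\cdot)$ is Landau's little-o. Gradient norm: $\|g\|_{g,X}=\sqrt{\sum_{\mathbf{x}\in X}\|\nabla g(\mathbf{x})\|^2}/\sqrt{\sum_{k=1}^n\deg_k(g)^2}$, and $0$ for constant $g$. Gradient-weighted norm of $g=\sum_ic_it_i$ (distinct terms $t_i$): $\|g\|_{\mathrm{gw},X}=\sqrt{\sum_ic_i^2\|t_i\|_{g,X}^2}$; gradient-weighted unitary means this equals $1$. Border of a set of terms: $\partial\mathcal{O}=(\bigcup_kx_k\mathcal{O})\setminus\mathcal{O}$. ABM algorithm with gradient-weighted normalization, input $(X,\epsilon,\sigma)$: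 initialize $G=\emptyset$, $\mathcal{O}=\{1\}$. For $d=1,2,\ldots$: set $L=\{b\in\partial\mathcal{O}:\deg b=d\}$; if $L=\emptyset$, output $(\mathcal{O},G)$ and stop. Otherwise repeat until $L$ is empty: (S1) take the $\sigma$-smallest $b\in L$ and remove it; (S2) with current $\mathcal{O}=\{o_1,\ldots,o_s\}$, let $M=(b(X)\ o_1(X)\ \cdots\ o_s(X))$, $D=\mathrm{diag}(\|b\|_{\mathrm{gw},X},\|o_1\|_{\mathrm{gw},X},\ldots,\|o_s\|_{\mathrm{gw},X})$, and compute the smallest generalized eigenvalue $\lambda_{\min}$ and eigenvector $\mathbf{v}_{\min}=(v_1,\ldots,v_{s+1})^\top$ of $M^\top M\mathbf{v}=\lambda D^2\mathbf{v}$ with $\mathbf{v}_{\min}^\top D^2\mathbf{v}_{\min}=1$; (S3) if $\sqrt{\lambda_{\min}}\le\epsilon$, add $g=v_1b+v_2o_1+\cdots+v_{s+1}o_s$ to $G$; else add $b$ to $\mathcal{O}$. *)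

theory Defs
  imports "HOL-Analysis.Analysis"
begin

text \<open>Terms (monomials) in the variables indexed by the finite type 'n are exponent
  vectors; polynomials are coefficient functions on terms (with finite support).
  Points of R^n are elements of real^'n.\<close>

type_synonym 'n monom = "'n \<Rightarrow> nat"
type_synonym 'n mpoly = "('n \<Rightarrow> nat) \<Rightarrow> real"

definition supp :: "'n mpoly \<Rightarrow> 'n monom set" where
  "supp c = {a. c a \<noteq> 0}"

definition monom_poly :: "'n monom \<Rightarrow> 'n mpoly" where
  "monom_poly t = (\<lambda>a. if a = t then 1 else 0)"

definition mono_eval :: "('n::finite) monom \<Rightarrow> real^'n \<Rightarrow> real" where
  "mono_eval a x = (\<Prod>k\<in>UNIV. (x$k) ^ (a k))"

definition poly_eval :: "('n::finite) mpoly \<Rightarrow> real^'n \<Rightarrow> real" where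
  "poly_eval c x = (\<Sum>a\<in>supp c. c a * mono_eval a x)"

definition mono_pderiv :: "('n::finite) monom \<Rightarrow> 'n \<Rightarrow> real^'n \<Rightarrow> real" where
  "mono_pderiv a k x =
     real (a k) * (x$k) ^ (a k - 1) * (\<Prod>j\<in>UNIV - {k}. (x$j) ^ (a j))"

definition poly_grad :: "('n::finite) mpoly \<Rightarrow> real^'n \<Rightarrow> real^'n" where
  "poly_grad c x = (\<chi> k. \<Sum>a\<in>supp c. c a * mono_pderiv a k x)"

definition tdeg :: "('n::finite) monom \<Rightarrow> nat" where
  "tdeg a = (\<Sum>k\<in>UNIV. a k)"

definition poly_deg :: "('n::finite) mpoly \<Rightarrow> nat" where
  "poly_deg c = Max (insert 0 (tdeg ` supp c))"

definition poly_deg_var :: "('n::finite) mpoly \<Rightarrow> 'n \<Rightarrow> nat" where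
  "poly_deg_var c k = Max (insert 0 ((\<lambda>a. a k) ` supp c))"

definition is_constant :: "('n::finite) mpoly \<Rightarrow> bool" where
  "is_constant c \<longleftrightarrow> supp c \<subseteq> {(\<lambda>_. 0)}"

text \<open>the data set X = {x_1,...,x_N} is given by an injective map from a finite index type 'm\<close>

definition grad_norm :: "('n::finite) mpoly \<Rightarrow> ('m::finite \<Rightarrow> real^'n) \<Rightarrow> real" where
  "grad_norm c X =
     (if is_constant c then 0
      else sqrt (\<Sum>i\<in>UNIV. (norm (poly_grad c (X i)))\<^sup>2)
           / sqrt (\<Sum>k\<in>UNIV. (real (poly_deg_var c k))\<^sup>2))"

definition gw_norm :: "('n::finite) mpoly \<Rightarrow> ('m::finite \<Rightarrow> real^'n) \<Rightarrow> real" where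
  "gw_norm c X = sqrt (\<Sum>a\<in>supp c. (c a)\<^sup>2 * (grad_norm (monom_poly a) X)\<^sup>2)"

definition eval_norm :: "('n::finite) mpoly \<Rightarrow> ('m::finite \<Rightarrow> real^'n) \<Rightarrow> real" where
  "eval_norm c X = sqrt (\<Sum>i\<in>UNIV. (poly_eval c (X i))\<^sup>2)"

definition mult_var :: "'n \<Rightarrow> 'n monom \<Rightarrow> 'n monom" where
  "mult_var k a = a(k := Suc (a k))"

definition border :: "'n monom set \<Rightarrow> 'n monom set" where
  "border Os = (\<Union>k. mult_var k ` Os) - Os"

definition deg_compat_term_order :: "(('n::finite) monom \<Rightarrow> 'n monom \<Rightarrow> bool) \<Rightarrow> bool" where
  "deg_compat_term_order lt \<longleftrightarrow>
     (\<forall>a. \<not> lt a a) \<and>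
     (\<forall>a b c. lt a b \<longrightarrow> lt b c \<longrightarrow> lt a c) \<and>
     (\<forall>a b. a \<noteq> b \<longrightarrow> lt a b \<or> lt b a) \<and>
     (\<forall>a. a \<noteq> (\<lambda>_. 0) \<longrightarrow> lt (\<lambda>_. 0) a) \<and>
     (\<forall>a b c. lt a b \<longrightarrow> lt (\<lambda>k. a k + c k) (\<lambda>k. b k + c k)) \<and>
     (\<forall>a b. tdeg a < tdeg b \<longrightarrow> lt a b)"

text \<open>Generalized eigenproblem M^T M v = lambda D^2 v with v^T D^2 v = 1, where the columns
  of M (and the diagonal of D) are indexed by the terms T = {b} \<union> Os.\<close>
definition gen_eig :: "('m::finite \<Rightarrow> real^'n::finite) \<Rightarrow> 'n monom set \<Rightarrow> real \<Rightarrow> 'n mpoly \<Rightarrow> bool" where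
  "gen_eig X T lam v \<longleftrightarrow>
     (\<forall>u\<in>T. (\<Sum>w\<in>T. (\<Sum>i\<in>UNIV. mono_eval u (X i) * mono_eval w (X i)) * v w)
              = lam * (gw_norm (monom_poly u) X)\<^sup>2 * v u) \<and>
     (\<Sum>u\<in>T. (gw_norm (monom_poly u) X)\<^sup>2 * (v u)\<^sup>2) = 1"

definition min_gen_eig :: "('m::finite \<Rightarrow> real^'n::finite) \<Rightarrow> 'n monom set \<Rightarrow> real \<Rightarrow> 'n mpoly \<Rightarrow> bool" where
  "min_gen_eig X T lam v \<longleftrightarrow>
     gen_eig X T lam v \<and> (\<forall>lam' v'. gen_eig X T lam' v' \<longrightarrow> lam \<le> lam')"

text \<open>Runs of the ABM algorithm with gradient-weighted normalization.
  abm_run X eps lt d L Os G Of Gf: being inside degree d with remaining candidate set L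
  and current (Os, G), the algorithm can terminate with output (Of, Gf).
  The choice of the eigenvector is left nondeterministic.\<close>
inductive abm_run ::
  "('m::finite \<Rightarrow> real^'n::finite) \<Rightarrow> real \<Rightarrow> ('n monom \<Rightarrow> 'n monom \<Rightarrow> bool) \<Rightarrow> nat
   \<Rightarrow> 'n monom set \<Rightarrow> 'n monom set \<Rightarrow> 'n mpoly set \<Rightarrow> 'n monom set \<Rightarrow> 'n mpoly set \<Rightarrow> bool"
  for X eps lt where
  stop: "{b\<in>border Os. tdeg b = Suc d} = {} \<Longrightarrow> abm_run X eps lt d {} Os G Os G"
| next_deg: "{b\<in>border Os. tdeg b = Suc d} \<noteq> {} \<Longrightarrow>
     abm_run X eps lt (Suc d) {b\<in>border Os. tdeg b = Suc d} Os G Of Gf \<Longrightarrow>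
     abm_run X eps lt d {} Os G Of Gf"
| add_G: "b \<in> L \<Longrightarrow> (\<forall>b'\<in>L. b' \<noteq> b \<longrightarrow> lt b b') \<Longrightarrow>
     min_gen_eig X (insert b Os) lam v \<Longrightarrow> sqrt lam \<le> eps \<Longrightarrow>
     abm_run X eps lt d (L - {b}) Os
        (insert (\<lambda>a. if a \<in> insert b Os then v a else 0) G) Of Gf \<Longrightarrow>
     abm_run X eps lt d L Os G Of Gf"
| add_O: "b \<in> L \<Longrightarrow> (\<forall>b'\<in>L. b' \<noteq> b \<longrightarrow> lt b b') \<Longrightarrow>
     min_gen_eig X (insert b Os) lam v \<Longrightarrow> \<not> sqrt lam \<le> eps \<Longrightarrow>
     abm_run X eps lt d (L - {b}) (insert b Os) G Of Gf \<Longrightarrow>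
     abm_run X eps lt d L Os G Of Gf"

definition abm_output ::
  "('m::finite \<Rightarrow> real^'n::finite) \<Rightarrow> real \<Rightarrow> ('n monom \<Rightarrow> 'n monom \<Rightarrow> bool)
   \<Rightarrow> 'n monom set \<Rightarrow> 'n mpoly set \<Rightarrow> bool" where
  "abm_output X eps lt Of Gf \<longleftrightarrow> abm_run X eps lt 0 {} {(\<lambda>_. 0)} {} Of Gf"

definition pmax :: "('m::finite \<Rightarrow> real^'n) \<Rightarrow> real" where
  "pmax P = Max (range (\<lambda>i. norm (P i)))"

end

theory Submission
  imports Defs
begin

text \<open>A first-order expansion of g at every data point gives
  \<open>\<parallel>g(X+P)\<parallel> \<le> \<parallel>g(X)\<parallel> + \<parallel>P\<parallel>\<^sub>m\<^sub>a\<^sub>x \<parallel>\<nabla>g(X)\<parallel> + o(\<parallel>P\<parallel>\<^sub>m\<^sub>a\<^sub>x)\<close>, with \<open>\<parallel>\<nabla>g(X)\<parallel>\<close> the Frobenius norm of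
  the gradients at all data points. Splitting the gradient over the terms of g, each term
  \<open>t\<close> contributes \<open>\<parallel>\<nabla>t(X)\<parallel> = \<parallel>t\<parallel>\<^sub>g\<^sub>,\<^sub>X \<surd>(\<Sum>\<^sub>k deg\<^sub>k(t)\<^sup>2) \<le> deg(g) \<parallel>t\<parallel>\<^sub>g\<^sub>,\<^sub>X\<close>, and Cauchy-Schwarz
  bounds the sum by \<open>deg(g) \<surd>|S| \<parallel>g\<parallel>\<^sub>g\<^sub>w\<^sub>,\<^sub>X\<close>, where S is the set of terms of g with nonzero
  gradient norm. For a generator \<open>\<parallel>g(X)\<parallel> = \<surd>\<lambda>\<^sub>m\<^sub>i\<^sub>n \<le> \<epsilon>\<close>, and \<open>|S| \<le> N\<close> because the algorithm
  keeps the evaluation vectors of the constant term and of the terms of \<open>\<O>\<close> with nonzero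
  gradient norm linearly independent: a term b with nonzero gradient norm whose evaluation
  vector lies in their span yields a kernel vector of M of positive D-norm, i.e. the
  generalized eigenvalue 0, so b becomes a generator instead of joining \<open>\<O>\<close>.\<close>

section \<open>First-order perturbation of the evaluation vector\<close>

lemma has_derivative_mono_eval:
  fixes a :: "('n::finite) monom"
  shows "(mono_eval a has_derivative (\<lambda>h. \<Sum>k\<in>UNIV. mono_pderiv a k x * h$k)) (at x)"
proof -
  have "\<And>k. ((\<lambda>y::real^'n. (y$k)^(a k)) has_derivative
      (\<lambda>h. of_nat (a k) * h$k * (x$k)^(a k - 1))) (at x)"
    by (rule has_derivative_power) (rule bounded_linear_imp_has_derivative[OF bounded_linear_vec_nth])
  then have "((\<lambda>y. \<Prod>k\<in>UNIV. (y$k)^(a k)) has_derivative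
      (\<lambda>h. \<Sum>k\<in>UNIV. (of_nat (a k) * h$k * (x$k)^(a k - 1)) * (\<Prod>j\<in>UNIV - {k}. (x$j)^(a j)))) (at x)"
    by (rule has_derivative_prod)
  moreover have "(\<lambda>h. \<Sum>k\<in>UNIV. (of_nat (a k) * h$k * (x$k)^(a k - 1)) * (\<Prod>j\<in>UNIV - {k}. (x$j)^(a j)))
      = (\<lambda>h. \<Sum>k\<in>UNIV. mono_pderiv a k x * h$k)"
    by (auto simp: mono_pderiv_def intro!: sum.cong)
  ultimately show ?thesis
    unfolding mono_eval_def[abs_def] by simp
qed

lemma has_derivative_poly_eval:
  fixes g :: "('n::finite) mpoly"
  shows "(poly_eval g has_derivative (\<lambda>h. poly_grad g x \<bullet> h)) (at x)"
proof -
  have "((\<lambda>y. \<Sum>a\<in>supp g. g a * mono_eval a y) has_derivative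
      (\<lambda>h. \<Sum>a\<in>supp g. g a * (\<Sum>k\<in>UNIV. mono_pderiv a k x * h$k))) (at x)"
    by (intro has_derivative_sum has_derivative_mult_right has_derivative_mono_eval)
  moreover have "(\<Sum>a\<in>supp g. g a * (\<Sum>k\<in>UNIV. mono_pderiv a k x * h$k)) = poly_grad g x \<bullet> h" for h
    by (simp add: poly_grad_def inner_vec_def sum_distrib_left sum_distrib_right mult.assoc
        sum.swap[of _ "supp g"])
  ultimately show ?thesis
    unfolding poly_eval_def[abs_def] by simp
qed

lemma norm_le_pmax: "norm (P i) \<le> pmax P"
  unfolding pmax_def by (rule Max_ge) auto

lemma pmax_nonneg: "0 \<le> pmax P"
  using norm_le_pmax[of P undefined] norm_ge_zero order_trans by blast

lemma norm_inner_rows_le: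
  fixes D P :: "'m::finite \<Rightarrow> real^'n::finite"
  shows "norm (\<chi> i. D i \<bullet> P i) \<le> pmax P * norm (\<chi> i. D i)"
proof -
  have "\<bar>D i \<bullet> P i\<bar> \<le> pmax P * norm (D i)" for i
  proof -
    have "\<bar>D i \<bullet> P i\<bar> \<le> norm (D i) * norm (P i)"
      by (rule Cauchy_Schwarz_ineq2)
    also have "\<dots> \<le> norm (D i) * pmax P"
      by (simp add: mult_left_mono norm_le_pmax)
    finally show ?thesis
      by (simp add: mult.commute)
  qed
  then have "L2_set (\<lambda>i. \<bar>D i \<bullet> P i\<bar>) UNIV \<le> L2_set (\<lambda>i. pmax P * norm (D i)) UNIV"
    by (intro L2_set_mono) auto
  then show ?thesis
    by (simp add: norm_vec_def L2_set_right_distrib pmax_nonneg)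
qed

lemma uniform_first_order_remainder:
  fixes f :: "real^'n::finite \<Rightarrow> real" and X :: "'m::finite \<Rightarrow> real^'n"
  assumes deriv: "\<And>i. (f has_derivative f' i) (at (X i))" and "e > 0"
  shows "\<exists>\<delta>>0. \<forall>P. pmax P < \<delta> \<longrightarrow>
           norm (\<chi> i. f (X i + P i) - f (X i) - f' i (P i)) \<le> e * pmax P"
proof -
  define e' where "e' = e / real CARD('m)"
  have e': "e' > 0"
    using \<open>e > 0\<close> by (simp add: e'_def)
  have "\<exists>d>0. \<forall>p. norm p < d \<longrightarrow> \<bar>f (X i + p) - f (X i) - f' i p\<bar> \<le> e' * norm p" for i
  proof -
    obtain d where "d > 0" and d: "\<forall>y. norm (y - X i) < d \<longrightarrow>
        norm (f y - f (X i) - f' i (y - X i)) \<le> e' * norm (y - X i)"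
      using deriv[of i] e' unfolding has_derivative_at_alt by blast
    have "\<bar>f (X i + p) - f (X i) - f' i p\<bar> \<le> e' * norm p" if "norm p < d" for p
      using d[rule_format, of "X i + p"] that by simp
    with \<open>d > 0\<close> show ?thesis by blast
  qed
  then obtain d where d_pos: "\<And>i. d i > 0" and d: "\<And>i p. norm p < d i \<Longrightarrow>
      \<bar>f (X i + p) - f (X i) - f' i p\<bar> \<le> e' * norm p"
    by metis
  define \<delta> where "\<delta> = Min (range d)"
  have "\<delta> > 0"
    unfolding \<delta>_def using d_pos by (subst Min_gr_iff) auto
  moreover have "norm (\<chi> i. f (X i + P i) - f (X i) - f' i (P i)) \<le> e * pmax P"
    if "pmax P < \<delta>" for P
  proof -
    have bound: "\<bar>f (X i + P i) - f (X i) - f' i (P i)\<bar> \<le> e' * pmax P" for i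
    proof -
      have "\<delta> \<le> d i"
        unfolding \<delta>_def by (rule Min_le) auto
      then have "\<bar>f (X i + P i) - f (X i) - f' i (P i)\<bar> \<le> e' * norm (P i)"
        using d norm_le_pmax[of P i] that by force
      also have "\<dots> \<le> e' * pmax P"
        using e' norm_le_pmax[of P i] by simp
      finally show ?thesis .
    qed
    have "norm (\<chi> i. f (X i + P i) - f (X i) - f' i (P i))
        \<le> (\<Sum>i\<in>UNIV. \<bar>f (X i + P i) - f (X i) - f' i (P i)\<bar>)"
      using norm_le_l1_cart[of "\<chi> i. f (X i + P i) - f (X i) - f' i (P i)"] by simp
    also have "\<dots> \<le> (\<Sum>i\<in>(UNIV :: 'm set). e' * pmax P)"
      by (rule sum_mono) (rule bound)
    also have "\<dots> = e * pmax P"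
      by (simp add: e'_def)
    finally show ?thesis .
  qed
  ultimately show ?thesis by blast
qed

lemma perturbed_eval_le:
  fixes f :: "real^'n::finite \<Rightarrow> real" and X Df :: "'m::finite \<Rightarrow> real^'n"
  assumes deriv: "\<And>i. (f has_derivative (\<lambda>h. Df i \<bullet> h)) (at (X i))"
    and eval: "norm (\<chi> i. f (X i)) \<le> eps" and grad: "norm (\<chi> i. Df i) \<le> A"
  shows "\<forall>e>0. \<exists>\<delta>>0. \<forall>P. pmax P < \<delta> \<longrightarrow>
           norm (\<chi> i. f (X i + P i)) \<le> eps + pmax P * A + e * pmax P"
proof (intro allI impI)
  fix e :: real
  assume "e > 0"
  then obtain \<delta> where "\<delta> > 0" and remainder: "\<And>P. pmax P < \<delta> \<Longrightarrow>
      norm (\<chi> i. f (X i + P i) - f (X i) - Df i \<bullet> P i) \<le> e * pmax P"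
    using uniform_first_order_remainder[of f "\<lambda>i h. Df i \<bullet> h" X e] deriv by blast
  have "norm (\<chi> i. f (X i + P i)) \<le> eps + pmax P * A + e * pmax P" if "pmax P < \<delta>" for P
  proof -
    have decomp: "(\<chi> i. f (X i + P i)) = (\<chi> i. f (X i)) + (\<chi> i. Df i \<bullet> P i)
        + (\<chi> i. f (X i + P i) - f (X i) - Df i \<bullet> P i)"
      by (simp add: vec_eq_iff)
    have "norm (\<chi> i. f (X i + P i)) \<le> norm (\<chi> i. f (X i)) + norm (\<chi> i. Df i \<bullet> P i)
        + norm (\<chi> i. f (X i + P i) - f (X i) - Df i \<bullet> P i)"
      unfolding decomp by (intro norm_triangle_le add_right_mono norm_triangle_ineq)
    moreover have "norm (\<chi> i. Df i \<bullet> P i) \<le> pmax P * A"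
      using norm_inner_rows_le[of Df P] grad pmax_nonneg[of P]
      by (meson mult_left_mono order_trans)
    ultimately show ?thesis
      using eval remainder[OF that] by linarith
  qed
  with \<open>\<delta> > 0\<close> show "\<exists>\<delta>>0. \<forall>P. pmax P < \<delta> \<longrightarrow>
      norm (\<chi> i. f (X i + P i)) \<le> eps + pmax P * A + e * pmax P"
    by blast
qed

lemma eval_norm_eq_norm: "eval_norm g Y = norm (\<chi> i. poly_eval g (Y i))"
  by (simp add: eval_norm_def norm_vec_def L2_set_def)

section \<open>The gradients of a polynomial at the data points\<close>

lemma supp_monom_poly [simp]: "supp (monom_poly a) = {a}"
  by (auto simp: supp_def monom_poly_def)

lemma poly_grad_monom_poly: "poly_grad (monom_poly a) x = (\<chi> k. mono_pderiv a k x)"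
  unfolding poly_grad_def supp_monom_poly by (simp add: monom_poly_def)

lemma poly_deg_var_monom_poly: "poly_deg_var (monom_poly a) k = a k"
  by (simp add: poly_deg_var_def)

lemma grad_norm_nonneg: "0 \<le> grad_norm c X"
  by (simp add: grad_norm_def sum_nonneg)

lemma grad_norm_const_monom: "grad_norm (monom_poly (\<lambda>_. 0)) X = 0"
  by (simp add: grad_norm_def is_constant_def)

lemma gw_norm_monom_poly: "gw_norm (monom_poly a) X = grad_norm (monom_poly a) X"
  using grad_norm_nonneg[of "monom_poly a" X]
  unfolding gw_norm_def supp_monom_poly by (simp add: monom_poly_def)

lemma norm_grad_monom_poly:
  fixes X :: "'m::finite \<Rightarrow> real^'n::finite"
  shows "norm (\<chi> i. poly_grad (monom_poly a) (X i)) =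
     grad_norm (monom_poly a) X * sqrt (\<Sum>k\<in>UNIV. (real (a k))\<^sup>2)"
proof (cases "a = (\<lambda>_. 0)")
  case True
  then show ?thesis
    by (simp add: grad_norm_const_monom poly_grad_monom_poly mono_pderiv_def vec_eq_iff)
next
  case False
  then obtain k where "a k \<noteq> 0"
    by auto
  then have "0 < (real (a k))\<^sup>2"
    by simp
  also have "\<dots> \<le> (\<Sum>k\<in>UNIV. (real (a k))\<^sup>2)"
    by (rule member_le_sum) auto
  finally have "0 < sqrt (\<Sum>k\<in>UNIV. (real (a k))\<^sup>2)"
    by simp
  moreover have "grad_norm (monom_poly a) X
      = sqrt (\<Sum>i\<in>UNIV. (norm (poly_grad (monom_poly a) (X i)))\<^sup>2) / sqrt (\<Sum>k\<in>UNIV. (real (a k))\<^sup>2)"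
    using False by (simp add: grad_norm_def is_constant_def poly_deg_var_monom_poly)
  moreover have "norm (\<chi> i. poly_grad (monom_poly a) (X i))
      = sqrt (\<Sum>i\<in>UNIV. (norm (poly_grad (monom_poly a) (X i)))\<^sup>2)"
    by (simp add: norm_vec_def L2_set_def)
  ultimately show ?thesis
    by simp
qed

lemma sqrt_sum_power2_le_tdeg: "sqrt (\<Sum>k\<in>UNIV. (real (a k))\<^sup>2) \<le> real (tdeg a)"
  using L2_set_le_sum[of UNIV "\<lambda>k. real (a k)"] by (simp add: L2_set_def tdeg_def)

lemma norm_grad_monom_poly_le:
  fixes X :: "'m::finite \<Rightarrow> real^'n::finite"
  shows "norm (\<chi> i. poly_grad (monom_poly a) (X i)) \<le> real (tdeg a) * grad_norm (monom_poly a) X"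
proof -
  have "grad_norm (monom_poly a) X * sqrt (\<Sum>k\<in>UNIV. (real (a k))\<^sup>2)
      \<le> grad_norm (monom_poly a) X * real (tdeg a)"
    by (intro mult_left_mono sqrt_sum_power2_le_tdeg grad_norm_nonneg)
  then show ?thesis
    by (simp add: norm_grad_monom_poly mult.commute)
qed

lemma tdeg_le_poly_deg: "finite (supp g) \<Longrightarrow> a \<in> supp g \<Longrightarrow> tdeg a \<le> poly_deg g"
  unfolding poly_deg_def by (rule Max_ge) auto

lemma poly_grad_rows_eq_sum:
  fixes X :: "'m::finite \<Rightarrow> real^'n::finite"
  shows "(\<chi> i. poly_grad g (X i)) = (\<Sum>a\<in>supp g. g a *\<^sub>R (\<chi> i. poly_grad (monom_poly a) (X i)))"
  by (simp add: vec_eq_iff sum_component poly_grad_monom_poly)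
    (simp add: poly_grad_def sum_distrib_left)

definition grad_support :: "('m::finite \<Rightarrow> real^'n::finite) \<Rightarrow> 'n mpoly \<Rightarrow> 'n monom set" where
  "grad_support X g = {a\<in>supp g. grad_norm (monom_poly a) X \<noteq> 0}"

lemma sum_coeff_grad_norm_le:
  fixes X :: "'m::finite \<Rightarrow> real^'n::finite"
  assumes fin: "finite (supp g)"
  shows "(\<Sum>a\<in>supp g. \<bar>g a\<bar> * grad_norm (monom_poly a) X)
    \<le> sqrt (real (card (grad_support X g))) * gw_norm g X"
proof -
  define gn where "gn a = grad_norm (monom_poly a) X" for a
  define S where "S = grad_support X g"
  have "S \<subseteq> supp g"
    by (auto simp: S_def grad_support_def)
  have gn_outside: "\<forall>a\<in>supp g - S. gn a = 0"
    by (auto simp: S_def grad_support_def gn_def)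
  have "(\<Sum>a\<in>supp g. \<bar>g a\<bar> * gn a) = (\<Sum>a\<in>S. \<bar>g a * gn a\<bar> * \<bar>1\<bar>)"
    using fin \<open>S \<subseteq> supp g\<close> gn_outside
    by (simp add: abs_mult gn_def grad_norm_nonneg sum.mono_neutral_right)
  also have "\<dots> \<le> L2_set (\<lambda>a. g a * gn a) S * L2_set (\<lambda>_. 1) S"
    by (rule L2_set_mult_ineq)
  also have "L2_set (\<lambda>a. g a * gn a) S = gw_norm g X"
  proof -
    have "(\<Sum>a\<in>S. (g a)\<^sup>2 * (gn a)\<^sup>2) = (\<Sum>a\<in>supp g. (g a)\<^sup>2 * (gn a)\<^sup>2)"
      using fin \<open>S \<subseteq> supp g\<close> gn_outside by (intro sum.mono_neutral_left) auto
    then show ?thesis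
      by (simp add: L2_set_def gw_norm_def gn_def power_mult_distrib)
  qed
  also have "L2_set (\<lambda>_. 1::real) S = sqrt (real (card (grad_support X g)))"
    by (simp add: L2_set_constant S_def)
  finally show ?thesis
    by (simp add: gn_def mult.commute)
qed

lemma norm_poly_grad_rows_le:
  fixes X :: "'m::finite \<Rightarrow> real^'n::finite"
  assumes fin: "finite (supp g)"
  shows "norm (\<chi> i. poly_grad g (X i))
    \<le> real (poly_deg g) * sqrt (real (card (grad_support X g))) * gw_norm g X"
proof -
  have "norm (\<chi> i. poly_grad g (X i))
      \<le> (\<Sum>a\<in>supp g. \<bar>g a\<bar> * norm (\<chi> i. poly_grad (monom_poly a) (X i)))"
    by (subst poly_grad_rows_eq_sum) (rule order_trans[OF norm_sum], simp)
  also have "\<dots> \<le> (\<Sum>a\<in>supp g. real (poly_deg g) * (\<bar>g a\<bar> * grad_norm (monom_poly a) X))"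
  proof (rule sum_mono)
    fix a
    assume "a \<in> supp g"
    then have "real (tdeg a) * grad_norm (monom_poly a) X \<le> real (poly_deg g) * grad_norm (monom_poly a) X"
      using tdeg_le_poly_deg[OF fin] by (intro mult_right_mono grad_norm_nonneg) simp
    with norm_grad_monom_poly_le[of a X]
    show "\<bar>g a\<bar> * norm (\<chi> i. poly_grad (monom_poly a) (X i))
        \<le> real (poly_deg g) * (\<bar>g a\<bar> * grad_norm (monom_poly a) X)"
      by (metis abs_ge_zero mult.left_commute mult_left_mono order_trans)
  qed
  also have "\<dots> \<le> real (poly_deg g) * (sqrt (real (card (grad_support X g))) * gw_norm g X)"
    using sum_coeff_grad_norm_le[OF fin, of X]
    by (simp add: mult_left_mono flip: sum_distrib_left)
  finally show ?thesis
    by (simp add: mult.assoc)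
qed

section \<open>Invariants of the ABM algorithm\<close>

definition term_vec :: "('m::finite \<Rightarrow> real^'n::finite) \<Rightarrow> 'n monom \<Rightarrow> real^'m" where
  "term_vec X a = (\<chi> i. mono_eval a (X i))"

text \<open>The constant term has gradient norm 0 but is kept: counting its (nonzero) evaluation
  vector leaves room for the new border term in the bound on the number of terms of a generator
  with nonzero gradient norm.\<close>

definition active_terms :: "('m::finite \<Rightarrow> real^'n::finite) \<Rightarrow> 'n monom set \<Rightarrow> 'n monom set" where
  "active_terms X Os = {a\<in>Os. a = (\<lambda>_. 0) \<or> grad_norm (monom_poly a) X \<noteq> 0}"

definition abm_invariant :: "('m::finite \<Rightarrow> real^'n::finite) \<Rightarrow> 'n monom set \<Rightarrow> bool" where
  "abm_invariant X Os \<longleftrightarrow> finite Os \<and> (\<lambda>_. 0) \<in> Os \<and>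
     independent (term_vec X ` active_terms X Os) \<and> inj_on (term_vec X) (active_terms X Os)"

definition abm_generator :: "('m::finite \<Rightarrow> real^'n::finite) \<Rightarrow> real \<Rightarrow> 'n mpoly \<Rightarrow> bool" where
  "abm_generator X eps g \<longleftrightarrow>
     finite (supp g) \<and> eval_norm g X \<le> eps \<and> card (grad_support X g) \<le> CARD('m)"

lemma abm_invariant_init: "abm_invariant X {(\<lambda>_. 0)}"
proof -
  have "active_terms X {(\<lambda>_. 0)} = {(\<lambda>_. 0)}"
    by (auto simp: active_terms_def)
  moreover have "term_vec X (\<lambda>_. 0) \<noteq> 0"
    by (simp add: term_vec_def mono_eval_def vec_eq_iff)
  ultimately show ?thesis
    by (simp add: abm_invariant_def independent_insert)
qed

lemma card_active_terms_le:
  fixes X :: "'m::finite \<Rightarrow> real^'n::finite"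
  assumes "abm_invariant X Os"
  shows "card (active_terms X Os) \<le> CARD('m)"
proof -
  have "card (active_terms X Os) = card (term_vec X ` active_terms X Os)"
    using assms by (simp add: abm_invariant_def card_image)
  also have "\<dots> \<le> DIM(real^'m)"
    using assms independent_bound[of "term_vec X ` active_terms X Os"] by (auto simp: abm_invariant_def)
  finally show ?thesis
    by simp
qed

lemma poly_eval_restrict:
  assumes "finite T"
  shows "poly_eval (\<lambda>a. if a \<in> T then v a else 0) x = (\<Sum>a\<in>T. v a * mono_eval a x)"
  unfolding poly_eval_def using assms by (intro sum.mono_neutral_cong_left) (auto simp: supp_def)

lemma eval_norm_gen_eig:
  assumes "finite T" and eig: "gen_eig X T lam v"
  shows "eval_norm (\<lambda>a. if a \<in> T then v a else 0) X = sqrt lam"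
proof -
  have "(\<Sum>i\<in>UNIV. (\<Sum>a\<in>T. v a * mono_eval a (X i))\<^sup>2)
      = (\<Sum>i\<in>UNIV. \<Sum>u\<in>T. \<Sum>w\<in>T. v u * (mono_eval u (X i) * mono_eval w (X i)) * v w)"
    by (simp add: power2_eq_square sum_product ac_simps)
  also have "\<dots> = (\<Sum>u\<in>T. \<Sum>w\<in>T. \<Sum>i\<in>UNIV. v u * (mono_eval u (X i) * mono_eval w (X i)) * v w)"
    by (simp only: sum.swap[where A = UNIV])
  also have "\<dots> = (\<Sum>u\<in>T. v u * (\<Sum>w\<in>T. (\<Sum>i\<in>UNIV. mono_eval u (X i) * mono_eval w (X i)) * v w))"
    by (simp add: sum_distrib_left sum_distrib_right mult.assoc)
  also have "\<dots> = (\<Sum>u\<in>T. v u * (lam * (gw_norm (monom_poly u) X)\<^sup>2 * v u))"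
    using eig by (simp add: gen_eig_def)
  also have "\<dots> = lam * (\<Sum>u\<in>T. (gw_norm (monom_poly u) X)\<^sup>2 * (v u)\<^sup>2)"
    by (simp add: sum_distrib_left power2_eq_square ac_simps)
  also have "\<dots> = lam"
    using eig by (simp add: gen_eig_def)
  finally show ?thesis
    using \<open>finite T\<close> by (simp add: eval_norm_def poly_eval_restrict)
qed

lemma abm_generator_eigenpoly:
  fixes X :: "'m::finite \<Rightarrow> real^'n::finite"
  assumes inv: "abm_invariant X Os" and eig: "min_gen_eig X (insert b Os) lam v"
    and "sqrt lam \<le> eps"
  shows "abm_generator X eps (\<lambda>a. if a \<in> insert b Os then v a else 0)"
    (is "abm_generator X eps ?g")
proof -
  define Q where "Q = active_terms X Os"
  have fin: "finite (insert b Os)" and "finite Q" and "(\<lambda>_. 0) \<in> Q"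
    using inv by (auto simp: abm_invariant_def Q_def active_terms_def)
  have supp: "supp ?g \<subseteq> insert b Os"
    by (auto simp: supp_def)
  have "gen_eig X (insert b Os) lam v"
    using eig by (simp add: min_gen_eig_def)
  then have "eval_norm ?g X = sqrt lam"
    by (rule eval_norm_gen_eig[OF fin])
  with \<open>sqrt lam \<le> eps\<close> have eval: "eval_norm ?g X \<le> eps"
    by simp
  have "grad_support X ?g \<subseteq> insert b (Q - {(\<lambda>_. 0)})"
    using supp grad_norm_const_monom[of X]
    by (auto simp: grad_support_def Q_def active_terms_def)
  then have "card (grad_support X ?g) \<le> card (insert b (Q - {(\<lambda>_. 0)}))"
    using \<open>finite Q\<close> by (intro card_mono) auto
  also have "\<dots> \<le> Suc (card (Q - {(\<lambda>_. 0)}))"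
    using \<open>finite Q\<close> by (simp add: card_insert_if)
  also have "\<dots> = card Q"
    using \<open>finite Q\<close> \<open>(\<lambda>_. 0) \<in> Q\<close> by (rule card_Suc_Diff1)
  also have "\<dots> \<le> CARD('m)"
    using card_active_terms_le[OF inv] by (simp add: Q_def)
  finally show ?thesis
    using eval finite_subset[OF supp fin] by (simp add: abm_generator_def)
qed

lemma gen_eig_zero_if_kernel:
  assumes kernel: "\<And>i. (\<Sum>a\<in>T. w a * mono_eval a (X i)) = 0"
    and s_def: "s \<equiv> \<Sum>a\<in>T. (gw_norm (monom_poly a) X)\<^sup>2 * (w a)\<^sup>2" and "0 < s"
  shows "gen_eig X T 0 (\<lambda>a. w a / sqrt s)"
proof -
  have "(\<Sum>w'\<in>T. (\<Sum>i\<in>UNIV. mono_eval u (X i) * mono_eval w' (X i)) * (w w' / sqrt s))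
      = (\<Sum>i\<in>UNIV. mono_eval u (X i) * (\<Sum>a\<in>T. w a * mono_eval a (X i))) / sqrt s" for u
    by (simp add: sum_distrib_left sum_distrib_right sum_divide_distrib ac_simps sum.swap[of _ T])
  moreover have "(\<Sum>a\<in>T. (gw_norm (monom_poly a) X)\<^sup>2 * (w a / sqrt s)\<^sup>2) = s / s"
    using \<open>0 < s\<close> by (simp add: power_divide flip: sum_divide_distrib) (simp add: s_def)
  ultimately show ?thesis
    using \<open>0 < s\<close> kernel by (simp add: gen_eig_def)
qed

lemma gen_eig_zero_if_in_span:
  fixes X :: "'m::finite \<Rightarrow> real^'n::finite"
  assumes "finite Os" and "Q \<subseteq> Os" and "b \<notin> Os" and "inj_on (term_vec X) Q"
    and gn: "grad_norm (monom_poly b) X \<noteq> 0"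
    and span: "term_vec X b \<in> span (term_vec X ` Q)"
  shows "\<exists>v. gen_eig X (insert b Os) 0 v"
proof -
  have "finite Q"
    using assms(1,2) finite_subset by blast
  then obtain u where "term_vec X b = (\<Sum>y\<in>term_vec X ` Q. u y *\<^sub>R y)"
    using span span_finite[of "term_vec X ` Q"] by auto
  then have "term_vec X b = (\<Sum>q\<in>Q. u (term_vec X q) *\<^sub>R term_vec X q)"
    using \<open>inj_on (term_vec X) Q\<close> by (simp add: sum.reindex)
  then have b_eval: "mono_eval b (X i) = (\<Sum>q\<in>Q. u (term_vec X q) * mono_eval q (X i))" for i
    by (auto simp: vec_eq_iff sum_component term_vec_def)
  define w where "w a = (if a = b then 1 else if a \<in> Q then - u (term_vec X a) else 0)" for a
  have kernel: "(\<Sum>a\<in>insert b Os. w a * mono_eval a (X i)) = 0" for i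
  proof -
    have "(\<Sum>a\<in>Os. w a * mono_eval a (X i)) = (\<Sum>a\<in>Q. w a * mono_eval a (X i))"
      using assms(1-3) by (intro sum.mono_neutral_right) (auto simp: w_def)
    also have "\<dots> = (\<Sum>q\<in>Q. - (u (term_vec X q) * mono_eval q (X i)))"
      using \<open>b \<notin> Os\<close> \<open>Q \<subseteq> Os\<close> by (intro sum.cong) (auto simp: w_def)
    also have "\<dots> = - mono_eval b (X i)"
      by (simp add: b_eval sum_negf)
    finally show ?thesis
      using assms(1,3) by (simp add: w_def)
  qed
  have "0 < (gw_norm (monom_poly b) X)\<^sup>2 * (w b)\<^sup>2"
    using gn by (simp add: gw_norm_monom_poly w_def)
  also have "\<dots> \<le> (\<Sum>a\<in>insert b Os. (gw_norm (monom_poly a) X)\<^sup>2 * (w a)\<^sup>2)"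
    using \<open>finite Os\<close> by (intro member_le_sum) simp_all
  finally show ?thesis
    using gen_eig_zero_if_kernel[where X = X and T = "insert b Os" and w = w, OF kernel reflexive]
    by blast
qed

lemma abm_invariant_insert:
  fixes X :: "'m::finite \<Rightarrow> real^'n::finite"
  assumes inv: "abm_invariant X Os" and eig: "min_gen_eig X (insert b Os) lam v"
    and "\<not> sqrt lam \<le> eps" and "0 \<le> eps"
  shows "abm_invariant X (insert b Os)"
proof (cases "b \<notin> Os \<and> grad_norm (monom_poly b) X \<noteq> 0")
  case False
  then have "active_terms X (insert b Os) = active_terms X Os"
    using inv by (auto simp: active_terms_def abm_invariant_def)
  then show ?thesis
    using inv by (simp add: abm_invariant_def insert_absorb)
next
  case True
  define Q where "Q = active_terms X Os"
  have "finite Os" and Q: "Q \<subseteq> Os" and inj: "inj_on (term_vec X) Q"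
    using inv by (auto simp: abm_invariant_def Q_def active_terms_def)
  have not_in_span: "term_vec X b \<notin> span (term_vec X ` Q)"
  proof
    assume "term_vec X b \<in> span (term_vec X ` Q)"
    then obtain v' where "gen_eig X (insert b Os) 0 v'"
      using gen_eig_zero_if_in_span[OF \<open>finite Os\<close> Q _ inj] True by blast
    then have "lam \<le> 0"
      using eig unfolding min_gen_eig_def by blast
    then have "sqrt lam \<le> 0"
      by simp
    with \<open>\<not> sqrt lam \<le> eps\<close> \<open>0 \<le> eps\<close> show False
      by linarith
  qed
  then have "term_vec X b \<notin> term_vec X ` Q"
    using span_base[of "term_vec X b" "term_vec X ` Q"] by blast
  with inj have "inj_on (term_vec X) (insert b Q)"
    by auto
  moreover have "independent (term_vec X ` Q)"
    using inv by (simp add: abm_invariant_def Q_def)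
  with not_in_span have "independent (insert (term_vec X b) (term_vec X ` Q))"
    by (rule independent_insertI)
  moreover have "active_terms X (insert b Os) = insert b Q"
    using True by (auto simp: active_terms_def Q_def)
  ultimately show ?thesis
    using inv by (simp add: abm_invariant_def)
qed

lemma abm_run_generators:
  fixes X :: "'m::finite \<Rightarrow> real^'n::finite"
  assumes "abm_run X eps lt d L Os G Of Gf" and "0 \<le> eps"
    and "abm_invariant X Os" and "\<forall>g\<in>G. abm_generator X eps g"
  shows "\<forall>g\<in>Gf. abm_generator X eps g"
  using assms
proof induction
  case (add_G b L Os lam v d G Of Gf)
  have "abm_generator X eps (\<lambda>a. if a \<in> insert b Os then v a else 0)"
    using abm_generator_eigenpoly[OF add_G.prems(2) add_G.hyps(3,4)] .
  with add_G.prems(3) show ?case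
    by (intro add_G.IH[OF add_G.prems(1,2)]) simp
next
  case (add_O b L Os lam v d G Of Gf)
  have "abm_invariant X (insert b Os)"
    using abm_invariant_insert[OF add_O.prems(2) add_O.hyps(3,4) add_O.prems(1)] .
  then show ?case
    using add_O.IH add_O.prems by blast
qed simp_all

theorem mainTheorem7:
  fixes X :: "'m::finite \<Rightarrow> real^'n::finite"
    and eps :: real
    and lt :: "'n monom \<Rightarrow> 'n monom \<Rightarrow> bool"
    and Os :: "'n monom set" and G :: "'n mpoly set" and g :: "'n mpoly"
  assumes "inj X"
    and "eps \<ge> 0"
    and "deg_compat_term_order lt"
    and "abm_output X eps lt Os G"
    and "g \<in> G"
    and "gw_norm g X = 1"
  shows "\<forall>e>0. \<exists>\<delta>>0. \<forall>P :: 'm \<Rightarrow> real^'n. pmax P < \<delta> \<longrightarrow>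
           eval_norm g (\<lambda>i. X i + P i)
             \<le> eps + pmax P * real (poly_deg g) * sqrt (real (card (range X))) + e * pmax P"
proof -
  \<comment> \<open>The term ordering only decides the order in which border terms are processed;
    the bound holds for every run.\<close>
  have "abm_generator X eps g"
    using abm_run_generators[of X eps lt 0 "{}" "{(\<lambda>_. 0)}" "{}" Os G] abm_invariant_init[of X]
      assms(2,4,5) by (auto simp: abm_output_def)
  then have fin: "finite (supp g)" and eval: "norm (\<chi> i. poly_eval g (X i)) \<le> eps"
    and card: "card (grad_support X g) \<le> card (range X)"
    using \<open>inj X\<close> by (auto simp: abm_generator_def eval_norm_eq_norm card_image)
  have "norm (\<chi> i. poly_grad g (X i)) \<le> real (poly_deg g) * sqrt (real (card (grad_support X g)))"
    using norm_poly_grad_rows_le[OF fin, of X] \<open>gw_norm g X = 1\<close> by simp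
  also have "\<dots> \<le> real (poly_deg g) * sqrt (real (card (range X)))"
    using card by (intro mult_left_mono) simp_all
  finally have grad: "norm (\<chi> i. poly_grad g (X i)) \<le> real (poly_deg g) * sqrt (real (card (range X)))" .
  show ?thesis
    using perturbed_eval_le[OF has_derivative_poly_eval eval grad]
    by (simp add: eval_norm_eq_norm mult.assoc)
qed

end
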